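(* Let $q\ge 4$ and let $H_1$ be a hyperplane of $\mathrm{PG}(U_1)$ with $|H_1\cap\mathcal O_1|=q^2-q+1$. Then every twisted cubic of $\mathcal O_1$ meets $H_1$ in at most three points.
   Context: $q$ is a prime power. Let $U_1\subset\mathbb F_{q^3}^8$ be the set of vectors $(a,b^{q^2},b^{q},c,b,c^{q},c^{q^2},d)$ with $a,d\in\mathbb F_q$, $b,c\in\mathbb F_{q^3}$; it is an $8$-dimensional $\mathbb F_q$-vector space, so $\mathrm{PG}(U_1)\cong\mathrm{PG}(7,q)$. For $(a,b,c,d)\ne 0$ let $P(a,b,c,d)$ be the point of $\mathrm{PG}(U_1)$ spanned by this vector. Let $\mathcal O_1=\{P(1,t,t^{q^2+q},t^{q^2+q+1}) : t\in\mathbb F_{q^3}\}\cup\{P(0,0,0,1)\}$. Let $\theta:\mathrm{PG}(1,q^3)\to\mathcal O_1$ be the bijection $\langle(1,t)\rangle\mapsto P(1,t,t^{q^2+q},t^{q^2+q+1})$, $\langle(0,1)\rangle\mapsto P(0,0,0,1)$. A $q$-order subline of $\mathrm{PG}(1,q^3)$ is the image of $\mathrm{PG}(1,q)=\{\langle(1,t)\rangle:t\in\mathbb F_q\}\cup\{\langle(0,1)\rangle\}$ under an element of $\mathrm{PGL}(2,q^3)$; the sets $\theta(L)$ are twisted cubics (each spanning a solid), called the twisted cubics of $\mathcal O_1$. *)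

theory Defs
  imports "HOL-Computational_Algebra.Primes" "HOL-Library.Cardinality"
begin

text \<open>The ambient field F_{q^3} is a finite field type 'a with CARD('a) = q^3;
  F_q is its subfield of elements fixed by x \<mapsto> x^q.  Vectors of F_{q^3}^8 are
  lists of length 8.\<close>

definition Fq :: "nat \<Rightarrow> 'a::field set" where
  "Fq q = {x. x ^ q = x}"

definition vecU :: "nat \<Rightarrow> 'a::field \<Rightarrow> 'a \<Rightarrow> 'a \<Rightarrow> 'a \<Rightarrow> 'a list" where
  "vecU q a b c d = [a, b ^ (q^2), b ^ q, c, b, c ^ q, c ^ (q^2), d]"

definition U1 :: "nat \<Rightarrow> 'a::field list set" where
  "U1 q = {vecU q a b c d | a b c d. a \<in> Fq q \<and> d \<in> Fq q}"

definition zero8 :: "'a::field list" where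
  "zero8 = replicate 8 0"

definition pt :: "nat \<Rightarrow> 'a::field list \<Rightarrow> 'a list set" where
  "pt q v = {map (\<lambda>x. l * x) v | l. l \<in> Fq q}"

definition PG_U1 :: "nat \<Rightarrow> 'a::field list set set" where
  "PG_U1 q = {pt q u | u. u \<in> U1 q \<and> u \<noteq> zero8}"

definition P :: "nat \<Rightarrow> 'a::field \<Rightarrow> 'a \<Rightarrow> 'a \<Rightarrow> 'a \<Rightarrow> 'a list set" where
  "P q a b c d = pt q (vecU q a b c d)"

definition O1 :: "nat \<Rightarrow> 'a::field list set set" where
  "O1 q = {P q 1 t (t ^ (q^2 + q)) (t ^ (q^2 + q + 1)) | t. True} \<union> {P q 0 0 0 1}"

definition hyperplane :: "nat \<Rightarrow> 'a::field list set set \<Rightarrow> bool" where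
  "hyperplane q H \<longleftrightarrow> (\<exists>f :: 'a list \<Rightarrow> 'a.
      (\<forall>u\<in>U1 q. \<forall>v\<in>U1 q. f (map2 (+) u v) = f u + f v) \<and>
      (\<forall>l\<in>Fq q. \<forall>u\<in>U1 q. f (map (\<lambda>x. l * x) u) = l * f u) \<and>
      (\<forall>u\<in>U1 q. f u \<in> Fq q) \<and>
      (\<exists>u\<in>U1 q. f u \<noteq> 0) \<and>
      H = {pt q u | u. u \<in> U1 q \<and> u \<noteq> zero8 \<and> f u = 0})"

text \<open>theta on PG(1,q^3), with points given by nonzero representative pairs (x,y) = <(x,y)>.\<close>
definition theta :: "nat \<Rightarrow> 'a::field \<times> 'a \<Rightarrow> 'a list set" where
  "theta q p = (if fst p = 0 then P q 0 0 0 1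
               else (let t = snd p / fst p in P q 1 t (t ^ (q^2 + q)) (t ^ (q^2 + q + 1))))"

definition matapp :: "'a::field \<times> 'a \<times> 'a \<times> 'a \<Rightarrow> 'a \<times> 'a \<Rightarrow> 'a \<times> 'a" where
  "matapp M p = (case M of (a, b, c, d) \<Rightarrow> (a * fst p + b * snd p, c * fst p + d * snd p))"

text \<open>q-order subline: image of PG(1,q) under an element of PGL(2,q^3) (invertible matrix).\<close>
definition subline :: "nat \<Rightarrow> 'a::field \<times> 'a \<times> 'a \<times> 'a \<Rightarrow> ('a \<times> 'a) set" where
  "subline q M = matapp M ` ({(1, t) | t. t \<in> Fq q} \<union> {(0, 1)})"

definition twisted_cubic :: "nat \<Rightarrow> 'a::field list set set \<Rightarrow> bool" where
  "twisted_cubic q C \<longleftrightarrow> (\<exists>a b c d :: 'a. a * d - b * c \<noteq> 0 \<and> C = theta q ` subline q (a, b, c, d))"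

end

theory Submission
  imports Defs "HOL-Number_Theory.Residues" "HOL-Computational_Algebra.Polynomial"
    "HOL-Library.Product_Plus"
begin

text \<open>
  Write the points of a \<open>q\<close>-order subline as \<open>(\<alpha> + \<beta> t, \<gamma> + \<delta> t)\<close>, \<open>t \<in> \<bbbF>\<^sub>q\<close>, together
  with \<open>(\<beta>, \<delta>)\<close>, and let \<open>f\<close> be the functional defining \<open>H\<^sub>1\<close>. The coordinates of \<open>\<theta>\<close> are
  products of Frobenius conjugates, so they expand as
  \<open>\<theta>(\<alpha> + \<beta> t, \<gamma> + \<delta> t) = \<theta>(\<alpha>, \<gamma>) + L\<^sub>1(t) + L\<^sub>2(t^(q+q^2)) + N(t) \<theta>(\<beta>, \<delta>)\<close>
  with \<open>\<bbbF>\<^sub>q\<close>-linear \<open>L\<^sub>1, L\<^sub>2\<close> and the norm \<open>N\<close>. For \<open>t \<in> \<bbbF>\<^sub>q\<close> the value of \<open>f\<close> is therefore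
  a cubic \<open>c\<^sub>0 + c\<^sub>1 t + c\<^sub>2 t^2 + c\<^sub>3 t^3\<close>, and \<open>\<theta>(\<beta>, \<delta>) \<in> H\<^sub>1\<close> iff \<open>c\<^sub>3 = 0\<close>; unless the cubic
  vanishes identically, the twisted cubic meets \<open>H\<^sub>1\<close> in at most three points.

  If it does vanish, \<open>H\<^sub>1 \<inter> \<O>\<^sub>1\<close> consists of \<open>\<theta>(\<beta>, \<delta>)\<close> and the points with parameter
  \<open>t \<in> \<bbbF>\<^sub>q\<^sub>3\<close> solving \<open>\<phi>\<^sub>1(t) + \<phi>\<^sub>2(t^(q+q^2)) = 0\<close>, where the \<open>\<bbbF>\<^sub>q\<close>-linear forms
  \<open>\<phi>\<^sub>i = f \<circ> L\<^sub>i\<close> vanish at 1. Translating \<open>t\<close> by \<open>\<mu> \<in> \<bbbF>\<^sub>q\<close> changes the left-hand side by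
  \<open>-\<mu> \<phi>\<^sub>2(t)\<close>, so every coset \<open>t + \<bbbF>\<^sub>q\<close> outside \<open>ker \<phi>\<^sub>2\<close> contains exactly one solution.
  Together with \<open>t = 0\<close> there are at least \<open>q^2 - q + 1\<close> solutions, so \<open>H\<^sub>1\<close> would contain
  \<open>q^2 - q + 2\<close> points of \<open>\<O>\<^sub>1\<close>.
\<close>

section \<open>Finite fields and \<open>\<bbbF>\<^sub>q\<close>-linear forms\<close>

lemma finite_field_power_card:
  fixes x :: "'a :: {finite,field}"
  shows "x ^ CARD('a) = x"
proof (cases "x = 0")
  case False
  define G :: "'a monoid" where "G = \<lparr>carrier = UNIV - {0}, monoid.mult = (*), one = 1\<rparr>"
  have "comm_group G"
    by (rule comm_groupI) (auto simp: G_def intro!: bexI[of _ "inverse _"])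
  have pow: "y [^]\<^bsub>G\<^esub> n = y ^ n" for y :: 'a and n
    by (induction n) (simp_all add: G_def nat_pow_def)
  have "x [^]\<^bsub>G\<^esub> card (carrier G) = \<one>\<^bsub>G\<^esub>"
    by (rule comm_group.power_order_eq_one[OF \<open>comm_group G\<close>])
      (use False in \<open>simp_all add: G_def\<close>)
  then have unit: "x ^ (CARD('a) - 1) = 1"
    unfolding pow by (simp add: G_def card_Diff_singleton)
  have "CARD('a) = Suc (CARD('a) - 1)"
    using finite_UNIV_card_ge_0[where ?'a = 'a] by simp
  then have "x ^ CARD('a) = x ^ (CARD('a) - 1) * x"
    by (metis power_Suc2)
  also have "\<dots> = x"
    using unit by simp
  finally show ?thesis .
qed (simp add: power_0_left)

lemma Fq_iff: "x \<in> Fq q \<longleftrightarrow> x ^ q = x"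
  by (simp add: Fq_def)

lemma Fq_1: "1 \<in> Fq q"
  by (simp add: Fq_iff)

lemma Fq_mult: "x \<in> Fq q \<Longrightarrow> y \<in> Fq q \<Longrightarrow> x * y \<in> Fq q"
  by (simp add: Fq_iff power_mult_distrib)

lemma Fq_inverse: "x \<in> Fq q \<Longrightarrow> inverse x \<in> Fq q"
  by (simp add: Fq_iff power_inverse)

lemma Fq_divide: "x \<in> Fq q \<Longrightarrow> y \<in> Fq q \<Longrightarrow> x / y \<in> Fq q"
  by (simp add: Fq_iff power_divide)

lemma card_Fq_le:
  assumes "q \<ge> 2"
  shows "card (Fq q :: 'a::field set) \<le> q"
proof -
  define p :: "'a poly" where "p = monom 1 q - [:0, 1:]"
  have "coeff p q = 1"
    using assms by (simp add: p_def coeff_pCons split: nat.splits)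
  then have "p \<noteq> 0"
    by auto
  have "Fq q = {x. poly p x = 0}"
    by (auto simp: Fq_iff p_def poly_monom)
  then have "card (Fq q :: 'a set) \<le> degree p"
    using card_poly_roots_bound[OF \<open>p \<noteq> 0\<close>] by simp
  also have "degree p \<le> q"
    unfolding p_def
    by (rule degree_diff_le) (use assms in \<open>auto simp: degree_monom_le\<close>)
  finally show ?thesis .
qed

lemma card_roots_power_sum_le:
  assumes "m > 0" "n > 0"
  shows "card {x :: 'a::idom. (\<Sum>i<n. x ^ (m * i)) = 0} \<le> m * (n - 1)"
proof -
  define G :: "'a poly" where "G = (\<Sum>i<n. monom 1 (m * i))"
  have "coeff G 0 = (\<Sum>i<n. if i = 0 then 1 else 0)"
    unfolding G_def coeff_sum by (rule sum.cong) (use assms in auto)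
  also have "\<dots> = 1"
    using assms by simp
  finally have "G \<noteq> 0"
    by auto
  have roots: "{x :: 'a. (\<Sum>i<n. x ^ (m * i)) = 0} = {x. poly G x = 0}"
    by (simp add: G_def poly_sum poly_monom)
  have "card {x :: 'a. (\<Sum>i<n. x ^ (m * i)) = 0} \<le> degree G"
    unfolding roots by (rule card_poly_roots_bound[OF \<open>G \<noteq> 0\<close>])
  also have "degree G \<le> m * (n - 1)"
    unfolding G_def
    by (rule degree_sum_le) (auto intro: order.trans[OF degree_monom_le] simp: degree_monom_eq)
  finally show ?thesis .
qed

definition Fq_functional :: "nat \<Rightarrow> ('a::field \<Rightarrow> 'a) \<Rightarrow> bool" where
  "Fq_functional q \<phi> \<longleftrightarrow>
     (\<forall>x y. \<phi> (x + y) = \<phi> x + \<phi> y) \<and> (\<forall>l\<in>Fq q. \<forall>x. \<phi> (l * x) = l * \<phi> x) \<and> (\<forall>x. \<phi> x \<in> Fq q)"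

lemma Fq_functionalD:
  assumes "Fq_functional q \<phi>"
  shows "\<phi> (x + y) = \<phi> x + \<phi> y" "l \<in> Fq q \<Longrightarrow> \<phi> (l * x) = l * \<phi> x" "\<phi> x \<in> Fq q"
  using assms unfolding Fq_functional_def by auto

lemma Fq_functional_diff: "Fq_functional q \<phi> \<Longrightarrow> \<phi> (x - y) = \<phi> x - \<phi> y"
  by (metis Fq_functionalD(1) add_diff_cancel diff_add_cancel)

lemma Fq_functional_0: "Fq_functional q \<phi> \<Longrightarrow> \<phi> 0 = 0"
  using Fq_functional_diff[of q \<phi> 0 0] by simp

lemma Fq_functional_translate:
  assumes "Fq_functional q \<phi>" "\<phi> 1 = 0" "\<mu> \<in> Fq q"
  shows "\<phi> (t + \<mu>) = \<phi> t"
  using Fq_functionalD(1)[OF assms(1), of t \<mu>] Fq_functionalD(2)[OF assms(1) assms(3), of 1]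
    assms(2) by simp

section \<open>Coordinates of \<open>\<theta>\<close>\<close>

definition Tr :: "nat \<Rightarrow> 'a::field \<Rightarrow> 'a" where
  "Tr q x = x + x ^ q + x ^ (q^2)"

definition Nm :: "nat \<Rightarrow> 'a::field \<Rightarrow> 'a" where
  "Nm q x = x * x ^ q * x ^ (q^2)"

text \<open>Coordinates \<open>(a, b, c, d)\<close> with \<open>\<theta>\<langle>(x, y)\<rangle> = P(a, b, c, d)\<close>: those of \<open>t = y/x\<close>,
  multiplied by \<open>N(x)\<close> to clear denominators.\<close>
definition theta_coords :: "nat \<Rightarrow> 'a::field \<Rightarrow> 'a \<Rightarrow> 'a \<times> 'a \<times> 'a \<times> 'a" where
  "theta_coords q x y = (Nm q x, y * x ^ q * x ^ (q^2), x * y ^ q * y ^ (q^2), Nm q y)"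

definition vecU_of :: "nat \<Rightarrow> 'a::field \<times> 'a \<times> 'a \<times> 'a \<Rightarrow> 'a list" where
  "vecU_of q u = (case u of (a, b, c, d) \<Rightarrow> vecU q a b c d)"

definition scale4 :: "'a::field \<Rightarrow> 'a \<times> 'a \<times> 'a \<times> 'a \<Rightarrow> 'a \<times> 'a \<times> 'a \<times> 'a" where
  "scale4 l u = (case u of (a, b, c, d) \<Rightarrow> (l * a, l * b, l * c, l * d))"

definition theta_deg1 :: "nat \<Rightarrow> 'a::field \<Rightarrow> 'a \<Rightarrow> 'a \<Rightarrow> 'a \<Rightarrow> 'a \<Rightarrow> 'a \<times> 'a \<times> 'a \<times> 'a" where
  "theta_deg1 q \<alpha> \<beta> \<gamma> \<delta> t =
    (Tr q (\<beta> * \<alpha>^q * \<alpha>^(q^2) * t),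
     \<delta> * \<alpha>^q * \<alpha>^(q^2) * t + \<gamma> * \<beta>^q * \<alpha>^(q^2) * t^q + \<gamma> * \<alpha>^q * \<beta>^(q^2) * t^(q^2),
     \<beta> * \<gamma>^q * \<gamma>^(q^2) * t + \<alpha> * \<delta>^q * \<gamma>^(q^2) * t^q + \<alpha> * \<gamma>^q * \<delta>^(q^2) * t^(q^2),
     Tr q (\<delta> * \<gamma>^q * \<gamma>^(q^2) * t))"

definition theta_deg2 :: "nat \<Rightarrow> 'a::field \<Rightarrow> 'a \<Rightarrow> 'a \<Rightarrow> 'a \<Rightarrow> 'a \<Rightarrow> 'a \<times> 'a \<times> 'a \<times> 'a" where
  "theta_deg2 q \<alpha> \<beta> \<gamma> \<delta> s =
    (Tr q (\<alpha> * \<beta>^q * \<beta>^(q^2) * s),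
     \<gamma> * \<beta>^q * \<beta>^(q^2) * s + \<delta> * \<alpha>^q * \<beta>^(q^2) * s^q + \<delta> * \<beta>^q * \<alpha>^(q^2) * s^(q^2),
     \<alpha> * \<delta>^q * \<delta>^(q^2) * s + \<beta> * \<gamma>^q * \<delta>^(q^2) * s^q + \<beta> * \<delta>^q * \<gamma>^(q^2) * s^(q^2),
     Tr q (\<gamma> * \<delta>^q * \<delta>^(q^2) * s))"

definition section_poly ::
  "nat \<Rightarrow> ('a list \<Rightarrow> 'a) \<Rightarrow> 'a::field \<Rightarrow> 'a \<Rightarrow> 'a \<Rightarrow> 'a \<Rightarrow> 'a poly" where
  "section_poly q f \<alpha> \<beta> \<gamma> \<delta> =
    [:f (vecU_of q (theta_coords q \<alpha> \<gamma>)), f (vecU_of q (theta_deg1 q \<alpha> \<beta> \<gamma> \<delta> 1)),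
      f (vecU_of q (theta_deg2 q \<alpha> \<beta> \<gamma> \<delta> 1)), f (vecU_of q (theta_coords q \<beta> \<delta>)):]"

lemma pt_self: "v \<in> pt q v"
proof -
  have "v = map (\<lambda>x. 1 * x) v"
    by simp
  then show ?thesis
    unfolding pt_def using Fq_1 by blast
qed

lemma pt_scale:
  assumes "l \<in> Fq q" "l \<noteq> 0"
  shows "pt q (map (\<lambda>x. l * x) v) = pt q v"
proof
  show "pt q (map (\<lambda>x. l * x) v) \<subseteq> pt q v"
    unfolding pt_def using Fq_mult[OF _ assms(1)] by (auto simp: mult.assoc)
  have "map (\<lambda>x. m * x) v = map (\<lambda>x. (m / l) * x) (map (\<lambda>x. l * x) v)" for m
    using assms(2) by simp
  then show "pt q v \<subseteq> pt q (map (\<lambda>x. l * x) v)"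
    unfolding pt_def using Fq_divide[OF _ assms(1)] by blast
qed

lemma pt_eq_imp_multiple: "pt q v = pt q w \<Longrightarrow> \<exists>l. v = map (\<lambda>x. l * x) w"
  using pt_self[of v q] unfolding pt_def by auto

lemma theta_eq_imp_cross:
  assumes "theta q (x, y) = theta q (x', y')"
  shows "x * y' = x' * y"
proof (cases "x = 0"; cases "x' = 0")
  assume "x \<noteq> 0" "x' \<noteq> 0"
  then have "y / x = y' / x'"
    using assms by (auto simp: theta_def P_def Let_def vecU_def dest!: pt_eq_imp_multiple)
  with \<open>x \<noteq> 0\<close> \<open>x' \<noteq> 0\<close> show ?thesis
    by (simp add: field_simps)
qed (use assms in \<open>auto simp: theta_def P_def Let_def vecU_def dest!: pt_eq_imp_multiple\<close>)

lemma theta_scale: "c \<noteq> 0 \<Longrightarrow> theta q (c * x, c * y) = theta q (x, y)"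
  by (simp add: theta_def)

lemma theta_in_O1: "theta q p \<in> O1 q"
proof (cases "fst p = 0")
  case False
  define t where "t = snd p / fst p"
  have "theta q p = P q 1 t (t ^ (q^2 + q)) (t ^ (q^2 + q + 1))"
    using False by (simp add: theta_def t_def Let_def)
  then show ?thesis
    unfolding O1_def by blast
qed (simp add: theta_def O1_def)

lemma affine_ne_zero:
  fixes \<alpha> \<beta> \<gamma> \<delta> t :: "'a::field"
  assumes "\<alpha> * \<delta> - \<beta> * \<gamma> \<noteq> 0"
  shows "(\<alpha> + \<beta> * t, \<gamma> + \<delta> * t) \<noteq> (0, 0)"
proof -
  have "\<alpha> * \<delta> - \<beta> * \<gamma> = (\<alpha> + \<beta> * t) * \<delta> - \<beta> * (\<gamma> + \<delta> * t)"
    by (simp add: algebra_simps)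
  then show ?thesis
    using assms by auto
qed

lemma theta_affine_inj:
  assumes det: "\<alpha> * \<delta> - \<beta> * \<gamma> \<noteq> 0"
  shows "inj (\<lambda>t. theta q (\<alpha> + \<beta> * t, \<gamma> + \<delta> * t))"
proof
  fix t t'
  assume "theta q (\<alpha> + \<beta> * t, \<gamma> + \<delta> * t) = theta q (\<alpha> + \<beta> * t', \<gamma> + \<delta> * t')"
  then have "(\<alpha> + \<beta> * t) * (\<gamma> + \<delta> * t') - (\<alpha> + \<beta> * t') * (\<gamma> + \<delta> * t) = 0"
    by (auto dest: theta_eq_imp_cross)
  also have "(\<alpha> + \<beta> * t) * (\<gamma> + \<delta> * t') - (\<alpha> + \<beta> * t') * (\<gamma> + \<delta> * t)
      = (\<alpha> * \<delta> - \<beta> * \<gamma>) * (t' - t)"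
    by (simp add: algebra_simps)
  finally show "t = t'"
    using det by simp
qed

lemma theta_affine_ne_infinity:
  assumes det: "\<alpha> * \<delta> - \<beta> * \<gamma> \<noteq> 0"
  shows "theta q (\<alpha> + \<beta> * t, \<gamma> + \<delta> * t) \<noteq> theta q (\<beta>, \<delta>)"
proof
  assume "theta q (\<alpha> + \<beta> * t, \<gamma> + \<delta> * t) = theta q (\<beta>, \<delta>)"
  then have "(\<alpha> + \<beta> * t) * \<delta> - \<beta> * (\<gamma> + \<delta> * t) = 0"
    by (auto dest: theta_eq_imp_cross)
  then show False
    using det by (simp add: algebra_simps)
qed

lemma O1_eq_theta:
  assumes "z \<in> O1 q"
  obtains x y where "(x, y) \<noteq> (0, 0)" "z = theta q (x, y)"
proof -
  from assms consider t where "z = theta q (1, t)" | "z = theta q (0, 1)"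
    unfolding O1_def theta_def by auto
  then show thesis
  proof cases
    case (1 t)
    then show thesis
      by (intro that[of 1 t]) simp_all
  next
    case 2
    then show thesis
      by (intro that[of 0 1]) simp_all
  qed
qed

lemma cramer_2x2:
  fixes \<alpha> \<beta> \<gamma> \<delta> x y :: "'a::field"
  assumes "\<alpha> * \<delta> - \<beta> * \<gamma> \<noteq> 0"
  obtains u v where "x = \<alpha> * u + \<beta> * v" "y = \<gamma> * u + \<delta> * v"
proof
  define D where "D = \<alpha> * \<delta> - \<beta> * \<gamma>"
  have "D \<noteq> 0"
    using assms by (simp add: D_def)
  have "\<alpha> * ((\<delta> * x - \<beta> * y) / D) + \<beta> * ((\<alpha> * y - \<gamma> * x) / D)
      = (\<alpha> * (\<delta> * x - \<beta> * y) + \<beta> * (\<alpha> * y - \<gamma> * x)) / D"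
    by (simp add: add_divide_distrib)
  also have "\<alpha> * (\<delta> * x - \<beta> * y) + \<beta> * (\<alpha> * y - \<gamma> * x) = D * x"
    by (simp add: D_def algebra_simps)
  finally show "x = \<alpha> * ((\<delta> * x - \<beta> * y) / D) + \<beta> * ((\<alpha> * y - \<gamma> * x) / D)"
    using \<open>D \<noteq> 0\<close> by simp
  have "\<gamma> * ((\<delta> * x - \<beta> * y) / D) + \<delta> * ((\<alpha> * y - \<gamma> * x) / D)
      = (\<gamma> * (\<delta> * x - \<beta> * y) + \<delta> * (\<alpha> * y - \<gamma> * x)) / D"
    by (simp add: add_divide_distrib)
  also have "\<gamma> * (\<delta> * x - \<beta> * y) + \<delta> * (\<alpha> * y - \<gamma> * x) = D * y"
    by (simp add: D_def algebra_simps)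
  finally show "y = \<gamma> * ((\<delta> * x - \<beta> * y) / D) + \<delta> * ((\<alpha> * y - \<gamma> * x) / D)"
    using \<open>D \<noteq> 0\<close> by simp
qed

lemma O1_theta_affine_cases:
  assumes det: "\<alpha> * \<delta> - \<beta> * \<gamma> \<noteq> 0" and "z \<in> O1 q"
  obtains t where "z = theta q (\<alpha> + \<beta> * t, \<gamma> + \<delta> * t)" | "z = theta q (\<beta>, \<delta>)"
proof -
  obtain x y where "(x, y) \<noteq> (0, 0)" and z: "z = theta q (x, y)"
    using O1_eq_theta[OF \<open>z \<in> O1 q\<close>] .
  obtain u v where xy: "x = \<alpha> * u + \<beta> * v" "y = \<gamma> * u + \<delta> * v"
    using cramer_2x2[OF det] .
  show thesis
  proof (cases "u = 0")
    case False
    have "x = u * (\<alpha> + \<beta> * (v / u))" "y = u * (\<gamma> + \<delta> * (v / u))"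
      using xy False by (simp_all add: field_simps)
    then show thesis
      using that(1) z theta_scale[OF False] by metis
  next
    case True
    then have "v \<noteq> 0"
      using \<open>(x, y) \<noteq> (0, 0)\<close> xy by auto
    then show thesis
      using that(2) z xy True theta_scale[of v q \<beta> \<delta>] by (simp add: mult.commute)
  qed
qed

lemma card_roots_cubic_with_infinity:
  fixes c0 c1 c2 c3 :: "'a::idom"
  assumes "[:c0, c1, c2, c3:] \<noteq> 0"
  shows "card {s. poly [:c0, c1, c2, c3:] s = 0} + (if c3 = 0 then 1 else 0) \<le> 3"
proof (cases "c3 = 0")
  case True
  then have "card {s. poly [:c0, c1, c2, c3:] s = 0} \<le> degree [:c0, c1, c2, c3:]"
    using card_poly_roots_bound[OF assms] by simp
  also have "\<dots> \<le> 2"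
    using True by simp
  finally show ?thesis
    using True by simp
next
  case False
  then show ?thesis
    using card_poly_roots_bound[OF assms] by simp
qed

section \<open>Counting in a field of order \<open>q^3\<close>\<close>

context
  fixes q :: nat
  assumes prime_power: "\<exists>p k. prime p \<and> k > 0 \<and> q = p ^ k"
    and card_field: "CARD('a::{finite,field}) = q ^ 3"
begin

lemma q_ge_2: "q \<ge> 2"
  using prime_power prime_ge_2_nat
  by (metis One_nat_def Suc_1 Suc_leI one_less_power prime_gt_1_nat)

lemma frob_add: "(x + y :: 'a) ^ q = x ^ q + y ^ q"
proof -
  obtain p k where pk: "prime p" "k > 0" "q = p ^ k"
    using prime_power by blast
  have "prime CHAR('a)"
    by (rule prime_CHAR_semidom[OF finite_imp_CHAR_pos]) simp
  moreover have "CHAR('a) dvd p ^ (k * 3)"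
    using CHAR_dvd_CARD[where 'a='a] card_field pk by (simp add: power_mult)
  ultimately have "CHAR('a) = p"
    using pk(1) prime_dvd_power primes_dvd_imp_eq by blast
  then show ?thesis
    using freshmans_dream'[OF \<open>prime CHAR('a)\<close>] pk(3) by blast
qed

lemma frob_cube: "(x :: 'a) ^ (q^3) = x"
  using finite_field_power_card card_field by metis

lemma frob_sq: "(x :: 'a) ^ (q^2) = (x ^ q) ^ q"
  by (simp add: power2_eq_square power_mult)

lemma frob_cube': "(((x :: 'a) ^ q) ^ q) ^ q = x"
  using frob_cube[of x] by (simp add: power3_eq_cube power_mult mult.assoc)

lemma frob_zero: "(0 :: 'a) ^ q = 0"
  using q_ge_2 by (simp add: power_0_left)

lemma frob_minus: "(- x :: 'a) ^ q = - (x ^ q)"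
  using frob_add[of x "- x"] by (simp add: frob_zero eq_neg_iff_add_eq_0 add.commute)

lemma frob_diff: "(x - y :: 'a) ^ q = x ^ q - y ^ q"
  using frob_add[of x "- y"] frob_minus[of y] by simp

lemmas frob_simps = frob_add power_mult_distrib frob_sq frob_cube' frob_minus frob_diff frob_zero

lemma Fq_0: "(0 :: 'a) \<in> Fq q"
  by (simp add: Fq_iff frob_zero)

lemma Fq_add: "x \<in> Fq q \<Longrightarrow> y \<in> Fq q \<Longrightarrow> (x + y :: 'a) \<in> Fq q"
  by (simp add: Fq_iff frob_add)

lemma Fq_uminus: "x \<in> Fq q \<Longrightarrow> (- x :: 'a) \<in> Fq q"
  by (simp add: Fq_iff frob_minus)

lemma Tr_Fq: "Tr q (x :: 'a) \<in> Fq q"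
  by (simp add: Fq_iff Tr_def frob_simps add_ac)

lemma Nm_Fq: "Nm q (x :: 'a) \<in> Fq q"
  by (simp add: Fq_iff Nm_def frob_simps mult_ac)

lemma card_Fq_ge: "q \<le> card (Fq q :: 'a set)"
proof -
  define n where "n = q^2 + q + 1"
  let ?G = "{x :: 'a. (\<Sum>i<n. x ^ ((q - 1) * i)) = 0}"
  have "card ?G \<le> (q - 1) * (n - 1)"
    using q_ge_2 by (intro card_roots_power_sum_le) (simp_all add: n_def)
  also have "(q - 1) * (n - 1) = q^3 - q"
    by (cases q) (simp_all add: n_def power2_eq_square power3_eq_cube algebra_simps)
  finally have card_G: "card ?G \<le> q^3 - q" .
  have "UNIV - {0} \<subseteq> (Fq q - {0}) \<union> ?G"
  proof
    fix x :: 'a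
    assume x: "x \<in> UNIV - {0}"
    define y where "y = x ^ (q - 1)"
    have "x * x ^ (q^3 - 1) = x ^ (q^3)"
      using q_ge_2 by (simp flip: power_Suc)
    then have "x ^ (q^3 - 1) = 1"
      using frob_cube[of x] x by simp
    moreover have "q^3 - 1 = (q - 1) * n"
      by (cases q) (simp_all add: n_def power2_eq_square power3_eq_cube algebra_simps)
    ultimately have "(y - 1) * (\<Sum>i<n. y ^ i) = 0"
      using power_diff_1_eq[of y n] by (simp add: y_def power_mult)
    moreover have "x * y = x ^ q"
      using q_ge_2 by (simp add: y_def flip: power_Suc)
    ultimately show "x \<in> (Fq q - {0}) \<union> ?G"
      using x by (auto simp: Fq_iff y_def power_mult)
  qed
  then have "card (UNIV - {0 :: 'a}) \<le> card (Fq q - {0 :: 'a}) + card ?G"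
    by (meson card_Un_le card_mono finite order.trans)
  then have "q^3 - 1 \<le> (card (Fq q :: 'a set) - 1) + (q^3 - q)"
    using card_G Fq_0 card_field by (simp add: card_Diff_singleton)
  moreover have "q \<le> q^3"
    using q_ge_2 by (simp add: power3_eq_cube)
  ultimately show ?thesis
    using q_ge_2 by linarith
qed

lemma card_Fq: "card (Fq q :: 'a set) = q"
  using card_Fq_le[OF q_ge_2] card_Fq_ge by (rule antisym)

lemma card_kernel_Fq_functional:
  assumes \<phi>: "Fq_functional q \<phi>" and "\<phi> t0 \<noteq> 0"
  shows "card {t :: 'a. \<phi> t = 0} = q^2"
proof -
  define e where "e = inverse (\<phi> t0) * t0"
  have "\<phi> e = 1"
    using Fq_functionalD(2)[OF \<phi> Fq_inverse[OF Fq_functionalD(3)[OF \<phi>]]] assms(2)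
    by (simp add: e_def)
  then have phi_e: "\<phi> (l * e) = l" if "l \<in> Fq q" for l
    using Fq_functionalD(2)[OF \<phi> that] by simp
  have "\<phi> (t - \<phi> t * e) = 0" for t
    using Fq_functional_diff[OF \<phi>] phi_e[OF Fq_functionalD(3)[OF \<phi>]] by simp
  then have "bij_betw (\<lambda>(k, l). k + l * e) ({t. \<phi> t = 0} \<times> Fq q) UNIV"
    by (intro bij_betw_byWitness[where f'="\<lambda>t. (t - \<phi> t * e, \<phi> t)"])
      (auto simp: Fq_functionalD(1)[OF \<phi>] phi_e Fq_functionalD(3)[OF \<phi>])
  then have "card {t :: 'a. \<phi> t = 0} * q = q^2 * q"
    using bij_betw_same_card card_field card_Fq
    by (fastforce simp: card_cartesian_product power3_eq_cube power2_eq_square)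
  then show ?thesis
    using q_ge_2 by simp
qed

lemma card_kernel_Fq_functional_ge:
  assumes "Fq_functional q \<phi>"
  shows "q^2 \<le> card {t :: 'a. \<phi> t = 0}"
proof (cases "\<forall>t. \<phi> t = 0")
  case True
  then show ?thesis
    using card_field q_ge_2 by (simp add: power_increasing)
qed (use card_kernel_Fq_functional[OF assms] in auto)

text \<open>Rests on \<open>(t + \<mu>)^(q+q^2) = t^(q+q^2) + \<mu> (Tr(t) - t) + \<mu>^2\<close> for \<open>\<mu> \<in> \<bbbF>\<^sub>q\<close>.\<close>
lemma Fq_quadratic_translate:
  assumes \<phi>1: "Fq_functional q \<phi>1" and \<phi>2: "Fq_functional q \<phi>2"
    and "\<phi>1 1 = 0" "\<phi>2 1 = 0" and \<mu>: "\<mu> \<in> Fq q"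
  shows "\<phi>1 (t + \<mu>) + \<phi>2 ((t + \<mu>)^q * (t + \<mu>)^(q^2)) = \<phi>1 t + \<phi>2 (t^q * t^(q^2)) - \<mu> * \<phi>2 (t :: 'a)"
proof -
  have "(t + \<mu>)^q * (t + \<mu>)^(q^2) = t^q * t^(q^2) + \<mu> * (Tr q t * 1 - t) + (\<mu> * \<mu>) * 1"
    using \<mu> by (simp add: Fq_iff frob_add frob_sq Tr_def algebra_simps)
  moreover have "\<phi>2 (\<mu> * (Tr q t * 1 - t)) = \<mu> * (Tr q t * \<phi>2 1 - \<phi>2 t)"
    using Fq_functionalD(2)[OF \<phi>2 \<mu>] Fq_functionalD(2)[OF \<phi>2 Tr_Fq, of t 1]
      Fq_functional_diff[OF \<phi>2] by simp
  moreover have "\<phi>2 ((\<mu> * \<mu>) * 1) = (\<mu> * \<mu>) * \<phi>2 1"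
    using Fq_functionalD(2)[OF \<phi>2 Fq_mult[OF \<mu> \<mu>]] by blast
  ultimately have "\<phi>2 ((t + \<mu>)^q * (t + \<mu>)^(q^2)) = \<phi>2 (t^q * t^(q^2)) - \<mu> * \<phi>2 t"
    using \<open>\<phi>2 1 = 0\<close> Fq_functionalD(1)[OF \<phi>2] by simp
  then show ?thesis
    using Fq_functional_translate[OF \<phi>1 \<open>\<phi>1 1 = 0\<close> \<mu>] by simp
qed

lemma card_Fq_quadratic_zeros_off_kernel:
  assumes \<phi>1: "Fq_functional q \<phi>1" and \<phi>2: "Fq_functional q \<phi>2"
    and "\<phi>1 1 = 0" "\<phi>2 1 = 0" and "\<phi>2 t0 \<noteq> 0"
  shows "card ({t :: 'a. \<phi>1 t + \<phi>2 (t^q * t^(q^2)) = 0} - {t. \<phi>2 t = 0}) = q^2 - q"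
proof -
  define F where "F t = \<phi>1 t + \<phi>2 (t^q * t^(q^2))" for t
  define K where "K = {t :: 'a. \<phi>2 t = 0}"
  have F: "F (t + \<mu>) = F t - \<mu> * \<phi>2 t" and \<phi>2_translate: "\<phi>2 (t + \<mu>) = \<phi>2 t"
    if "\<mu> \<in> Fq q" for t \<mu>
    using Fq_quadratic_translate[OF \<phi>1 \<phi>2 assms(3,4) that]
      Fq_functional_translate[OF \<phi>2 assms(4) that] by (simp_all add: F_def)
  have Fq_ratio: "F t / \<phi>2 t \<in> Fq q" for t
    unfolding F_def using \<phi>1 \<phi>2 by (intro Fq_divide Fq_add) (auto dest: Fq_functionalD(3))
  \<comment> \<open>the zero of \<open>F\<close> in the coset \<open>t + \<bbbF>\<^sub>q\<close> is \<open>t + F t / \<phi>\<^sub>2 t\<close>\<close>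
  let ?r = "\<lambda>t. (t + F t / \<phi>2 t, - (F t / \<phi>2 t))"
  have "bij_betw (\<lambda>(s, \<mu>). s + \<mu>) (({t. F t = 0} - K) \<times> Fq q) (UNIV - K)"
  proof (rule bij_betw_byWitness[where f'="?r"])
    show "\<forall>a\<in>({t. F t = 0} - K) \<times> Fq q. ?r ((\<lambda>(s, \<mu>). s + \<mu>) a) = a"
      using F \<phi>2_translate by (auto simp: K_def)
    show "(\<lambda>(s, \<mu>). s + \<mu>) ` (({t. F t = 0} - K) \<times> Fq q) \<subseteq> UNIV - K"
      using \<phi>2_translate by (auto simp: K_def)
    show "?r ` (UNIV - K) \<subseteq> ({t. F t = 0} - K) \<times> Fq q"
      using F[OF Fq_ratio] \<phi>2_translate[OF Fq_ratio] Fq_uminus[OF Fq_ratio] by (auto simp: K_def)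
  qed simp
  then have "card ({t. F t = 0} - K) * q = card (UNIV - K)"
    using card_Fq by (metis bij_betw_same_card card_cartesian_product)
  also have "card (UNIV - K) = q^3 - q^2"
    using card_kernel_Fq_functional[OF \<phi>2 assms(5)] card_field by (simp add: K_def card_Diff_subset)
  also have "\<dots> = (q^2 - q) * q"
    by (simp add: power2_eq_square power3_eq_cube algebra_simps diff_mult_distrib)
  finally show ?thesis
    using q_ge_2 by (simp add: F_def K_def)
qed

lemma card_Fq_quadratic_zeros_ge:
  assumes \<phi>1: "Fq_functional q \<phi>1" and \<phi>2: "Fq_functional q \<phi>2" and "\<phi>1 1 = 0" "\<phi>2 1 = 0"
  shows "q^2 - q + 1 \<le> card {t :: 'a. \<phi>1 t + \<phi>2 (t^q * t^(q^2)) = 0}"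
proof (cases "\<forall>t. \<phi>2 t = 0")
  case True
  then have "{t :: 'a. \<phi>1 t + \<phi>2 (t^q * t^(q^2)) = 0} = {t. \<phi>1 t = 0}"
    by simp
  moreover have "q^2 - q + 1 \<le> q^2"
    using q_ge_2 by (cases q) (simp_all add: power2_eq_square)
  ultimately show ?thesis
    using card_kernel_Fq_functional_ge[OF \<phi>1] by simp
next
  case False
  then obtain t0 where "\<phi>2 t0 \<noteq> 0"
    by blast
  let ?S = "{t :: 'a. \<phi>1 t + \<phi>2 (t^q * t^(q^2)) = 0}"
  have "0 \<in> ?S" "0 \<notin> ?S - {t. \<phi>2 t = 0}"
    using Fq_functional_0[OF \<phi>1] Fq_functional_0[OF \<phi>2] by (simp_all add: frob_zero)
  then have "card (insert 0 (?S - {t. \<phi>2 t = 0})) \<le> card ?S"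
    by (intro card_mono) auto
  then show ?thesis
    using card_Fq_quadratic_zeros_off_kernel[OF assms \<open>\<phi>2 t0 \<noteq> 0\<close>] \<open>0 \<notin> _\<close> by simp
qed

section \<open>Hyperplane sections of \<open>\<O>\<^sub>1\<close>\<close>

lemma vecU_of_add: "vecU_of q (u + v) = map2 (+) (vecU_of q u) (vecU_of q (v :: 'a \<times> 'a \<times> 'a \<times> 'a))"
  by (cases u; cases v) (simp add: vecU_of_def vecU_def frob_simps)

lemma vecU_of_scale4:
  "l \<in> Fq q \<Longrightarrow> vecU_of q (scale4 l u) = map (\<lambda>x. l * x) (vecU_of q (u :: 'a \<times> 'a \<times> 'a \<times> 'a))"
  by (cases u) (simp add: vecU_of_def scale4_def vecU_def frob_simps Fq_iff)

lemma vecU_of_in_U1: "u \<in> Fq q \<times> UNIV \<times> UNIV \<times> Fq q \<Longrightarrow> vecU_of q (u :: 'a \<times> 'a \<times> 'a \<times> 'a) \<in> U1 q"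
  by (cases u) (auto simp: vecU_of_def U1_def)

lemma vecU_of_eq_zero8: "vecU_of q (u :: 'a \<times> 'a \<times> 'a \<times> 'a) = zero8 \<longleftrightarrow> u = 0"
  using q_ge_2 by (cases u) (auto simp: vecU_of_def zero8_def vecU_def numeral_eq_Suc zero_prod_def)

lemma theta_coords_in_U1_coords: "theta_coords q x (y :: 'a) \<in> Fq q \<times> UNIV \<times> UNIV \<times> Fq q"
  by (simp add: theta_coords_def Nm_Fq)

lemma theta_coords_ne_zero: "(x, y) \<noteq> (0, 0) \<Longrightarrow> theta_coords q x (y :: 'a) \<noteq> 0"
  by (auto simp: theta_coords_def Nm_def zero_prod_def)

lemma theta_eq_pt_theta_coords:
  assumes "(x, y) \<noteq> (0, 0)"
  shows "theta q (x, y) = pt q (vecU_of q (theta_coords q x (y :: 'a)))"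
proof (cases "x = 0")
  case True
  then have "theta_coords q x y = scale4 (Nm q y) (0, 0, 0, 1)"
    by (simp add: theta_coords_def scale4_def Nm_def frob_zero)
  moreover have "Nm q y \<noteq> 0"
    using assms True by (simp add: Nm_def)
  ultimately have "pt q (vecU_of q (theta_coords q x y)) = pt q (vecU_of q (0, 0, 0, 1))"
    by (simp add: vecU_of_scale4 Nm_Fq pt_scale)
  then show ?thesis
    using True by (simp add: theta_def P_def vecU_of_def)
next
  case False
  then have "theta_coords q x y = scale4 (Nm q x) (1, y/x, (y/x)^(q^2+q), (y/x)^(q^2+q+1))"
    by (simp add: theta_coords_def scale4_def Nm_def power_add field_simps)
  moreover have "Nm q x \<noteq> 0"
    using False by (simp add: Nm_def)
  ultimately have "pt q (vecU_of q (theta_coords q x y))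
      = pt q (vecU_of q (1, y/x, (y/x)^(q^2+q), (y/x)^(q^2+q+1)))"
    by (simp add: vecU_of_scale4 Nm_Fq pt_scale)
  then show ?thesis
    using False by (simp add: theta_def P_def vecU_of_def Let_def)
qed

lemma theta_coords_affine:
  "theta_coords q (\<alpha> + \<beta> * t) (\<gamma> + \<delta> * t) =
     theta_coords q \<alpha> \<gamma> + theta_deg1 q \<alpha> \<beta> \<gamma> \<delta> t + theta_deg2 q \<alpha> \<beta> \<gamma> \<delta> (t^q * t^(q^2))
     + scale4 (Nm q t) (theta_coords q \<beta> (\<delta> :: 'a))"
  unfolding theta_coords_def theta_deg1_def theta_deg2_def scale4_def Tr_def Nm_def
  by (simp add: frob_simps; simp add: algebra_simps)

lemma theta_deg1_add:
  "theta_deg1 q \<alpha> \<beta> \<gamma> \<delta> (t + t') = theta_deg1 q \<alpha> \<beta> \<gamma> \<delta> t + theta_deg1 q \<alpha> \<beta> \<gamma> \<delta> (t' :: 'a)"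
  by (simp add: theta_deg1_def Tr_def frob_simps; simp add: algebra_simps)

lemma theta_deg1_scale:
  "l \<in> Fq q \<Longrightarrow> theta_deg1 q \<alpha> \<beta> \<gamma> \<delta> (l * t) = scale4 l (theta_deg1 q \<alpha> \<beta> \<gamma> \<delta> (t :: 'a))"
  unfolding Fq_iff
  by (simp add: theta_deg1_def scale4_def Tr_def frob_simps; simp add: algebra_simps)

lemma theta_deg2_add:
  "theta_deg2 q \<alpha> \<beta> \<gamma> \<delta> (t + t') = theta_deg2 q \<alpha> \<beta> \<gamma> \<delta> t + theta_deg2 q \<alpha> \<beta> \<gamma> \<delta> (t' :: 'a)"
  by (simp add: theta_deg2_def Tr_def frob_simps; simp add: algebra_simps)

lemma theta_deg2_scale:
  "l \<in> Fq q \<Longrightarrow> theta_deg2 q \<alpha> \<beta> \<gamma> \<delta> (l * t) = scale4 l (theta_deg2 q \<alpha> \<beta> \<gamma> \<delta> (t :: 'a))"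
  unfolding Fq_iff
  by (simp add: theta_deg2_def scale4_def Tr_def frob_simps; simp add: algebra_simps)

lemma theta_deg_in_U1_coords:
  "theta_deg1 q \<alpha> \<beta> \<gamma> \<delta> (t :: 'a) \<in> Fq q \<times> UNIV \<times> UNIV \<times> Fq q"
  "theta_deg2 q \<alpha> \<beta> \<gamma> \<delta> (t :: 'a) \<in> Fq q \<times> UNIV \<times> UNIV \<times> Fq q"
  by (simp_all add: theta_deg1_def theta_deg2_def Tr_Fq)

lemma U1_coords_add:
  "u \<in> Fq q \<times> UNIV \<times> UNIV \<times> Fq q \<Longrightarrow> v \<in> Fq q \<times> UNIV \<times> UNIV \<times> Fq q
    \<Longrightarrow> u + (v :: 'a \<times> 'a \<times> 'a \<times> 'a) \<in> Fq q \<times> UNIV \<times> UNIV \<times> Fq q"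
  by (simp add: mem_Times_iff Fq_add)

lemma U1_coords_scale4:
  "l \<in> Fq q \<Longrightarrow> u \<in> Fq q \<times> UNIV \<times> UNIV \<times> Fq q
    \<Longrightarrow> scale4 l (u :: 'a \<times> 'a \<times> 'a \<times> 'a) \<in> Fq q \<times> UNIV \<times> UNIV \<times> Fq q"
  by (cases u) (simp add: scale4_def Fq_mult)

context
  fixes f :: "'a list \<Rightarrow> 'a"
  assumes f_add: "\<forall>u\<in>U1 q. \<forall>v\<in>U1 q. f (map2 (+) u v) = f u + f v"
    and f_scale: "\<forall>l\<in>Fq q. \<forall>u\<in>U1 q. f (map (\<lambda>x. l * x) u) = l * f u"
    and f_Fq: "\<forall>u\<in>U1 q. f u \<in> Fq q"
begin

lemma f_vecU_of_add:
  "u \<in> Fq q \<times> UNIV \<times> UNIV \<times> Fq q \<Longrightarrow> v \<in> Fq q \<times> UNIV \<times> UNIV \<times> Fq q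
    \<Longrightarrow> f (vecU_of q (u + v)) = f (vecU_of q u) + f (vecU_of q v)"
  using f_add vecU_of_in_U1 vecU_of_add by simp

lemma f_vecU_of_scale4:
  "l \<in> Fq q \<Longrightarrow> u \<in> Fq q \<times> UNIV \<times> UNIV \<times> Fq q
    \<Longrightarrow> f (vecU_of q (scale4 l u)) = l * f (vecU_of q u)"
  using f_scale vecU_of_in_U1 vecU_of_scale4 by simp

lemma theta_in_hyperplane_iff:
  assumes H: "H = {pt q u | u. u \<in> U1 q \<and> u \<noteq> zero8 \<and> f u = 0}" and "(x, y) \<noteq> (0, 0)"
  shows "theta q (x, y) \<in> H \<longleftrightarrow> f (vecU_of q (theta_coords q x y)) = 0"
proof
  let ?u = "theta_coords q x y"
  assume "theta q (x, y) \<in> H"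
  then obtain w where w: "w \<in> U1 q" "w \<noteq> zero8" "f w = 0" "pt q (vecU_of q ?u) = pt q w"
    using H theta_eq_pt_theta_coords[OF assms(2)] by auto
  then have "w \<in> pt q (vecU_of q ?u)"
    using pt_self by metis
  then obtain l where l: "l \<in> Fq q" "w = vecU_of q (scale4 l ?u)"
    unfolding pt_def by (auto simp: vecU_of_scale4)
  moreover have "l \<noteq> 0"
    using w(2) l(2) by (auto simp: scale4_def vecU_of_eq_zero8 zero_prod_def split: prod.splits)
  ultimately show "f (vecU_of q ?u) = 0"
    using w(3) f_vecU_of_scale4 theta_coords_in_U1_coords by simp
next
  assume "f (vecU_of q (theta_coords q x y)) = 0"
  then show "theta q (x, y) \<in> H"
    using H theta_eq_pt_theta_coords[OF assms(2)] theta_coords_ne_zero[OF assms(2)]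
      vecU_of_in_U1[OF theta_coords_in_U1_coords] vecU_of_eq_zero8 by blast
qed

lemma Fq_functional_theta_deg1: "Fq_functional q (\<lambda>t. f (vecU_of q (theta_deg1 q \<alpha> \<beta> \<gamma> \<delta> t)))"
  unfolding Fq_functional_def
  using f_vecU_of_add f_vecU_of_scale4 f_Fq vecU_of_in_U1 theta_deg_in_U1_coords
    theta_deg1_add theta_deg1_scale by simp

lemma Fq_functional_theta_deg2: "Fq_functional q (\<lambda>t. f (vecU_of q (theta_deg2 q \<alpha> \<beta> \<gamma> \<delta> t)))"
  unfolding Fq_functional_def
  using f_vecU_of_add f_vecU_of_scale4 f_Fq vecU_of_in_U1 theta_deg_in_U1_coords
    theta_deg2_add theta_deg2_scale by simp

lemma f_theta_coords_affine:
  "f (vecU_of q (theta_coords q (\<alpha> + \<beta> * t) (\<gamma> + \<delta> * t))) =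
     f (vecU_of q (theta_coords q \<alpha> \<gamma>)) + f (vecU_of q (theta_deg1 q \<alpha> \<beta> \<gamma> \<delta> t))
     + f (vecU_of q (theta_deg2 q \<alpha> \<beta> \<gamma> \<delta> (t^q * t^(q^2))))
     + Nm q t * f (vecU_of q (theta_coords q \<beta> \<delta>))"
  unfolding theta_coords_affine
  by (simp add: f_vecU_of_add f_vecU_of_scale4 U1_coords_add U1_coords_scale4 Nm_Fq
      theta_coords_in_U1_coords theta_deg_in_U1_coords)

lemma f_theta_coords_subline:
  assumes s: "s \<in> Fq q"
  shows "f (vecU_of q (theta_coords q (\<alpha> + \<beta> * s) (\<gamma> + \<delta> * s))) = poly (section_poly q f \<alpha> \<beta> \<gamma> \<delta>) s"
proof -
  have "s ^ q = s"
    using s by (simp add: Fq_iff)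
  have "theta_deg1 q \<alpha> \<beta> \<gamma> \<delta> s = scale4 s (theta_deg1 q \<alpha> \<beta> \<gamma> \<delta> 1)"
    using theta_deg1_scale[OF s, of \<alpha> \<beta> \<gamma> \<delta> 1] by simp
  moreover have "theta_deg2 q \<alpha> \<beta> \<gamma> \<delta> (s^q * s^(q^2)) = scale4 (s * s) (theta_deg2 q \<alpha> \<beta> \<gamma> \<delta> 1)"
    using theta_deg2_scale[OF Fq_mult[OF s s], of \<alpha> \<beta> \<gamma> \<delta> 1] \<open>s ^ q = s\<close> by (simp add: frob_sq)
  moreover have "Nm q s = s * s * s"
    using \<open>s ^ q = s\<close> by (simp add: Nm_def frob_sq)
  ultimately show ?thesis
    unfolding f_theta_coords_affine section_poly_def
    by (simp add: f_vecU_of_scale4 s Fq_mult theta_deg_in_U1_coords algebra_simps)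
qed

lemma subline_inter_hyperplane_subset:
  assumes det: "\<alpha> * \<delta> - \<beta> * \<gamma> \<noteq> 0"
    and H: "H = {pt q u | u. u \<in> U1 q \<and> u \<noteq> zero8 \<and> f u = 0}"
  shows "theta q ` subline q (\<alpha>, \<beta>, \<gamma>, \<delta>) \<inter> H \<subseteq>
    (\<lambda>s. theta q (\<alpha> + \<beta> * s, \<gamma> + \<delta> * s)) ` {s. poly (section_poly q f \<alpha> \<beta> \<gamma> \<delta>) s = 0}
    \<union> (if coeff (section_poly q f \<alpha> \<beta> \<gamma> \<delta>) 3 = 0 then {theta q (\<beta>, \<delta>)} else {})"
proof
  fix z
  assume z: "z \<in> theta q ` subline q (\<alpha>, \<beta>, \<gamma>, \<delta>) \<inter> H"
  then consider s where "s \<in> Fq q" "z = theta q (\<alpha> + \<beta> * s, \<gamma> + \<delta> * s)" | "z = theta q (\<beta>, \<delta>)"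
    unfolding subline_def matapp_def by auto
  then show "z \<in> (\<lambda>s. theta q (\<alpha> + \<beta> * s, \<gamma> + \<delta> * s)) ` {s. poly (section_poly q f \<alpha> \<beta> \<gamma> \<delta>) s = 0}
    \<union> (if coeff (section_poly q f \<alpha> \<beta> \<gamma> \<delta>) 3 = 0 then {theta q (\<beta>, \<delta>)} else {})"
  proof cases
    case (1 s)
    then show ?thesis
      using z theta_in_hyperplane_iff[OF H affine_ne_zero[OF det]] f_theta_coords_subline by auto
  next
    case 2
    have "(\<beta>, \<delta>) \<noteq> (0, 0)"
      using det by auto
    with 2 z have "f (vecU_of q (theta_coords q \<beta> \<delta>)) = 0"
      using theta_in_hyperplane_iff[OF H] by simp
    then have "coeff (section_poly q f \<alpha> \<beta> \<gamma> \<delta>) 3 = 0"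
      by (simp add: section_poly_def numeral_eq_Suc)
    with 2 show ?thesis
      by simp
  qed
qed

lemma card_subline_inter_hyperplane_le_3:
  assumes det: "\<alpha> * \<delta> - \<beta> * \<gamma> \<noteq> 0"
    and H: "H = {pt q u | u. u \<in> U1 q \<and> u \<noteq> zero8 \<and> f u = 0}"
    and "section_poly q f \<alpha> \<beta> \<gamma> \<delta> \<noteq> 0"
  shows "card (theta q ` subline q (\<alpha>, \<beta>, \<gamma>, \<delta>) \<inter> H) \<le> 3"
proof -
  obtain c0 c1 c2 c3 where p: "section_poly q f \<alpha> \<beta> \<gamma> \<delta> = [:c0, c1, c2, c3:]"
    by (simp add: section_poly_def)
  let ?R = "{s. poly [:c0, c1, c2, c3:] s = 0}"
  let ?E = "if c3 = 0 then {theta q (\<beta>, \<delta>)} else {}"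
  have "card (theta q ` subline q (\<alpha>, \<beta>, \<gamma>, \<delta>) \<inter> H)
      \<le> card ((\<lambda>s. theta q (\<alpha> + \<beta> * s, \<gamma> + \<delta> * s)) ` ?R \<union> ?E)"
    using subline_inter_hyperplane_subset[OF det H]
    by (intro card_mono) (auto simp: p numeral_eq_Suc)
  also have "\<dots> \<le> card ?R + card ?E"
    by (meson card_Un_le card_image_le finite order.trans add_right_mono)
  also have "card ?E = (if c3 = 0 then 1 else 0)"
    by simp
  also have "card ?R + (if c3 = 0 then 1 else 0) \<le> 3"
    using card_roots_cubic_with_infinity assms(3)[unfolded p] .
  finally show ?thesis .
qed

lemma O1_inter_hyperplane_eq:
  assumes det: "\<alpha> * \<delta> - \<beta> * \<gamma> \<noteq> 0"
    and H: "H = {pt q u | u. u \<in> U1 q \<and> u \<noteq> zero8 \<and> f u = 0}"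
    and "f (vecU_of q (theta_coords q \<alpha> \<gamma>)) = 0" "f (vecU_of q (theta_coords q \<beta> \<delta>)) = 0"
  shows "H \<inter> O1 q = insert (theta q (\<beta>, \<delta>)) ((\<lambda>t. theta q (\<alpha> + \<beta> * t, \<gamma> + \<delta> * t)) `
    {t. f (vecU_of q (theta_deg1 q \<alpha> \<beta> \<gamma> \<delta> t))
        + f (vecU_of q (theta_deg2 q \<alpha> \<beta> \<gamma> \<delta> (t^q * t^(q^2)))) = 0})"
    (is "_ = insert _ (?g ` ?S)")
proof
  have g_in_H: "?g t \<in> H \<longleftrightarrow> t \<in> ?S" for t
    unfolding theta_in_hyperplane_iff[OF H affine_ne_zero[OF det]] f_theta_coords_affine
    using assms(3,4) by simp
  show "H \<inter> O1 q \<subseteq> insert (theta q (\<beta>, \<delta>)) (?g ` ?S)"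
  proof
    fix z
    assume z: "z \<in> H \<inter> O1 q"
    then have "z \<in> O1 q"
      by simp
    with det show "z \<in> insert (theta q (\<beta>, \<delta>)) (?g ` ?S)"
    proof (cases rule: O1_theta_affine_cases)
      case (1 t)
      then show ?thesis
        using z g_in_H[of t] by auto
    qed simp
  qed
  have "(\<beta>, \<delta>) \<noteq> (0, 0)"
    using det by auto
  then have "theta q (\<beta>, \<delta>) \<in> H"
    using theta_in_hyperplane_iff[OF H] assms(4) by simp
  moreover have "?g ` ?S \<subseteq> H \<inter> O1 q"
    using g_in_H by (auto simp: theta_in_O1)
  ultimately show "insert (theta q (\<beta>, \<delta>)) (?g ` ?S) \<subseteq> H \<inter> O1 q"
    by (simp add: theta_in_O1)
qed

lemma card_O1_inter_hyperplane_ge: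
  assumes det: "\<alpha> * \<delta> - \<beta> * \<gamma> \<noteq> 0"
    and H: "H = {pt q u | u. u \<in> U1 q \<and> u \<noteq> zero8 \<and> f u = 0}"
    and "section_poly q f \<alpha> \<beta> \<gamma> \<delta> = 0"
  shows "q^2 - q + 2 \<le> card (H \<inter> O1 q)"
proof -
  have c: "f (vecU_of q (theta_coords q \<alpha> \<gamma>)) = 0" "f (vecU_of q (theta_deg1 q \<alpha> \<beta> \<gamma> \<delta> 1)) = 0"
    "f (vecU_of q (theta_deg2 q \<alpha> \<beta> \<gamma> \<delta> 1)) = 0" "f (vecU_of q (theta_coords q \<beta> \<delta>)) = 0"
    using assms(3) by (simp_all add: section_poly_def)
  define S where "S = {t. f (vecU_of q (theta_deg1 q \<alpha> \<beta> \<gamma> \<delta> t))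
    + f (vecU_of q (theta_deg2 q \<alpha> \<beta> \<gamma> \<delta> (t^q * t^(q^2)))) = 0}"
  define g where "g = (\<lambda>t. theta q (\<alpha> + \<beta> * t, \<gamma> + \<delta> * t))"
  have "H \<inter> O1 q = insert (theta q (\<beta>, \<delta>)) (g ` S)"
    unfolding g_def S_def using O1_inter_hyperplane_eq[OF det H c(1,4)] .
  moreover have "theta q (\<beta>, \<delta>) \<notin> g ` S"
    using theta_affine_ne_infinity[OF det] by (auto simp: g_def)
  moreover have "inj_on g S"
    using theta_affine_inj[OF det] unfolding g_def by (rule inj_on_subset) simp
  ultimately have "card (H \<inter> O1 q) = card S + 1"
    by (simp add: card_image)
  moreover have "q^2 - q + 1 \<le> card S"
    unfolding S_def
    using card_Fq_quadratic_zeros_ge[OF Fq_functional_theta_deg1 Fq_functional_theta_deg2 c(2,3)] .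
  ultimately show ?thesis
    by simp
qed

end

end

theorem mainTheorem7:
  fixes q :: nat and H :: "('a::{finite,field}) list set set"
  assumes "\<exists>p k. prime p \<and> k > 0 \<and> q = p ^ k"
    and "CARD('a) = q ^ 3"
    and "q \<ge> 4"
    and "hyperplane q H"
    and "card (H \<inter> O1 q) = q^2 - q + 1"
  shows "\<forall>C. twisted_cubic q C \<longrightarrow> card (C \<inter> H) \<le> 3"
proof (intro allI impI)
  fix C :: "'a list set set"
  assume "twisted_cubic q C"
  then obtain \<alpha> \<beta> \<gamma> \<delta> :: 'a where det: "\<alpha> * \<delta> - \<beta> * \<gamma> \<noteq> 0"
    and C: "C = theta q ` subline q (\<alpha>, \<beta>, \<gamma>, \<delta>)"
    unfolding twisted_cubic_def by blast
  obtain f :: "'a list \<Rightarrow> 'a" where f: "\<forall>u\<in>U1 q. \<forall>v\<in>U1 q. f (map2 (+) u v) = f u + f v"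
    "\<forall>l\<in>Fq q. \<forall>u\<in>U1 q. f (map (\<lambda>x. l * x) u) = l * f u" "\<forall>u\<in>U1 q. f u \<in> Fq q"
    and H: "H = {pt q u | u. u \<in> U1 q \<and> u \<noteq> zero8 \<and> f u = 0}"
    using assms(4) unfolding hyperplane_def by blast
  have "section_poly q f \<alpha> \<beta> \<gamma> \<delta> \<noteq> 0"
    using card_O1_inter_hyperplane_ge[OF assms(1,2) f det H] assms(5) by fastforce
  then show "card (C \<inter> H) \<le> 3"
    unfolding C by (rule card_subline_inter_hyperplane_le_3[OF assms(1,2) f det H])
qed

end
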